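(* Let $P>0$ and $p_B\in[0,1)$. For each integer $L\geq 1$, let $\beta_1,\ldots,\beta_L$ be i.i.d. with $\mathbb{P}(\beta_l=0)=p_B$, $\mathbb{P}(\beta_l=1)=1-p_B$, let $\theta_1,\ldots,\theta_L$ be i.i.d. $\mathrm{Uniform}(0,2\pi)$ independent of the $\beta_l$, let $h:=\sum_{l=1}^L\beta_le^{j\theta_l}$, and define $R(L):=\mathbb{E}[\log(1+|h|^2P)]$. Then: (i) $R(L)\geq (1-p_B^L)\log(1+P)$ for all $L\geq1$; (ii) $R(L)$ is a strictly increasing sequence in $L$; (iii) $\lim_{L\to\infty}R(L)=\infty$.
   Context: $R(L)$ is the ergodic rate of non-coherent joint transmission (the same scalar Gaussian codeword of power $P$ sent by all $L$ transmitters) over a multi-point intermittent block fading channel with blockage probability $p_B$ and independent uniform phase offsets. $\log$ is the logarithm in a fixed base. *)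

theory Defs
  imports "HOL-Probability.Probability"
begin

text \<open>Distribution of one transmitter: blockage indicator beta (True = unblocked, i.e. beta = 1,
  with probability 1 - pB) and an independent phase theta uniform on [0, 2 pi].\<close>
definition tx_measure :: "real \<Rightarrow> (bool \<times> real) measure" where
  "tx_measure pB = measure_pmf (bernoulli_pmf (1 - pB)) \<Otimes>\<^sub>M uniform_measure lborel {0..2*pi}"

definition chan :: "nat \<Rightarrow> (nat \<Rightarrow> bool \<times> real) \<Rightarrow> complex" where
  "chan L \<omega> = (\<Sum>l<L. of_bool (fst (\<omega> l)) * cis (snd (\<omega> l)))"

definition rate :: "real \<Rightarrow> real \<Rightarrow> real \<Rightarrow> nat \<Rightarrow> real" where
  "rate b P pB L = (\<integral>\<omega>. log b (1 + (cmod (chan L \<omega>))\<^sup>2 * P) \<partial>(\<Pi>\<^sub>M l\<in>{..<L}. tx_measure pB))"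

end

theory Submission
  imports Defs "HOL-Complex_Analysis.Complex_Analysis"
begin

text \<open>
  Adding a transmitter to a channel in state \<open>c\<close> either changes nothing (probability \<open>pB\<close>) or
  adds a uniformly rotated phasor \<open>cis \<theta>\<close>. The phase average of \<open>log (1 + |c + cis \<theta>|\<^sup>2 P)\<close> is
  \<open>log g\<close>, where \<open>g\<close> is the larger root of \<open>g\<^sup>2 - (1 + P (|c|\<^sup>2 + 1)) g + P\<^sup>2 |c|\<^sup>2\<close>: indeed
  \<open>1 + |c + u|\<^sup>2 P = g |1 + w u|\<^sup>2\<close> on the unit circle with \<open>|w| < 1\<close>, and \<open>log |1 + w u|\<close> has
  mean zero by the mean value property of the holomorphic function \<open>Ln (1 + w u)\<close>. Hence
  \<open>R (L + 1) = pB R L + (1 - pB) E [log g (|h\<^sub>L|)]\<close>. Since \<open>g \<ge> 1 + P\<close> and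
  \<open>g > 1 + |c|\<^sup>2 P\<close>, this recursion gives (i) and (ii).

  For (iii), the same recursion yields the moments \<open>E |h\<^sub>L|\<^sup>2 = (1 - pB) L\<close> and
  \<open>E |h\<^sub>L|\<^sup>4 = (1 - pB) L + 2 (1 - pB)\<^sup>2 L (L - 1)\<close>. Integrating a quadratic minorant of the
  increasing function \<open>x \<mapsto> log (1 + x P)\<close> (a Paley--Zygmund argument) then gives
  \<open>R L \<ge> 4/49 log (1 + (1 - pB) L P / 2)\<close>.
\<close>

lemma integral_uniform_measure_interval:
  fixes f :: "real \<Rightarrow> real"
  assumes "a < b" and f: "continuous_on UNIV f"
  shows "(\<integral>x. f x \<partial>uniform_measure lborel {a..b}) = integral {a..b} f / (b - a)"
proof -
  have "set_integrable lborel {a..b} f"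
    using continuous_on_subset[OF f subset_UNIV] by (rule borel_integrable_atLeastAtMost')
  from set_borel_integral_eq_integral(2)[OF this]
  have integral_eq: "(\<integral>x. indicator {a..b} x * f x \<partial>lborel) = integral {a..b} f"
    by (simp add: set_lebesgue_integral_def)
  have "uniform_measure lborel {a..b} = density lborel (\<lambda>x. ennreal (indicator {a..b} x / (b - a)))"
    unfolding uniform_measure_def using \<open>a < b\<close>
    by (intro density_cong) (auto simp: divide_ennreal ennreal_indicator[symmetric])
  then have "(\<integral>x. f x \<partial>uniform_measure lborel {a..b}) = (\<integral>x. indicator {a..b} x / (b - a) * f x \<partial>lborel)"
    using \<open>a < b\<close> borel_measurable_continuous_onI[OF f] by (simp add: integral_density)
  also have "\<dots> = (\<integral>x. indicator {a..b} x * f x \<partial>lborel) / (b - a)"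
    by (simp only: times_divide_eq_left integral_divide_zero)
  finally show ?thesis
    unfolding integral_eq .
qed

lemma has_integral_circle_mean:
  fixes f :: "complex \<Rightarrow> complex"
  assumes f: "f holomorphic_on cball z r" and "0 < r"
  shows "((\<lambda>t. f (z + r * cis t)) has_integral (2 * pi) * f z) {0..2*pi}"
proof -
  have "((\<lambda>u. f u / (u - z)) has_contour_integral (2 * pi * \<i> * f z)) (part_circlepath z r 0 (2*pi))"
    using Cauchy_integral_circlepath_simple[OF f] \<open>0 < r\<close> by (simp add: circlepath_def)
  then have "((\<lambda>t. f (z + r * cis t) / (z + r * cis t - z) * r * \<i> * cis t) has_integral (2 * pi * \<i> * f z)) {0..2*pi}"
    by (simp only: has_contour_integral_part_circlepath_iff pi_gt_zero mult_pos_pos zero_less_numeral)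
  moreover have "f (z + r * cis t) / (z + r * cis t - z) * r * \<i> * cis t = \<i> * f (z + r * cis t)" for t
    using \<open>0 < r\<close> by simp
  ultimately have "((\<lambda>t. \<i> * f (z + r * cis t)) has_integral \<i> * (2 * pi * f z)) {0..2*pi}"
    by (simp add: mult_ac)
  from has_integral_mult_right[OF this, of "- \<i>"] show ?thesis
    by simp
qed

lemma has_integral_ln_norm_one_plus_cis:
  fixes w :: complex
  assumes "norm w < 1"
  shows "((\<lambda>t. ln (norm (1 + w * cis t))) has_integral 0) {0..2*pi}"
proof -
  have not_nonpos: "1 + w * u \<notin> \<real>\<^sub>\<le>\<^sub>0" if "norm u \<le> 1" for u
  proof -
    have "norm (w * u) < 1"
      using assms that mult_left_le[of "norm u" "norm w"] by (simp add: norm_mult)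
    then have "0 < Re (1 + w * u)"
      using abs_Re_le_cmod[of "w * u"] by simp
    then show ?thesis
      unfolding complex_nonpos_Reals_iff by linarith
  qed
  have "(\<lambda>u. Ln (1 + w * u)) holomorphic_on cball 0 1"
    using not_nonpos by (intro holomorphic_on_Ln' holomorphic_intros) auto
  from has_integral_linear[OF has_integral_circle_mean[OF this] bounded_linear_Re]
  have "((\<lambda>t. Re (Ln (1 + w * cis t))) has_integral 0) {0..2*pi}"
    by (simp add: o_def)
  moreover have "Re (Ln (1 + w * cis t)) = ln (norm (1 + w * cis t))" for t
    using not_nonpos[of "cis t"] by (intro Re_Ln) auto
  ultimately show ?thesis by simp
qed

lemma norm_add_sq_complex:
  fixes x y :: complex
  shows "(norm (x + y))\<^sup>2 = (norm x)\<^sup>2 + (norm y)\<^sup>2 + 2 * Re (cnj x * y)"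
  unfolding cmod_power2 by (simp add: power2_eq_square algebra_simps)

lemma continuous_on_log_pos:
  fixes f :: "'a::topological_space \<Rightarrow> real"
  assumes "continuous_on S f" and "\<And>x. x \<in> S \<Longrightarrow> 0 < f x"
  shows "continuous_on S (\<lambda>x. log b (f x))"
proof -
  have "continuous_on S (\<lambda>x. ln (f x) * inverse (ln b))"
    using assms(1) by (intro continuous_intros) (auto dest: assms(2))
  then show ?thesis
    by (simp add: log_def divide_inverse)
qed

lemma integrable_continuous_comp_bounded:
  fixes \<phi> :: "'b::{real_normed_vector, heine_borel} \<Rightarrow> real"
  assumes "finite_measure M" and "continuous_on UNIV \<phi>" and "X \<in> borel_measurable M"
    and "\<And>x. x \<in> space M \<Longrightarrow> norm (X x) \<le> R"
  shows "integrable M (\<lambda>x. \<phi> (X x))"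
proof -
  interpret finite_measure M by fact
  have "compact (\<phi> ` cball 0 R)"
    by (intro compact_continuous_image continuous_on_subset[OF assms(2) subset_UNIV] compact_cball)
  then have "bounded (\<phi> ` cball 0 R)"
    by (rule compact_imp_bounded)
  then obtain B where B: "\<forall>y \<in> \<phi> ` cball 0 R. norm y \<le> B"
    unfolding bounded_iff by (elim exE) (rule that)
  show ?thesis
  proof (rule integrable_const_bound[where B = B])
    show "AE x in M. norm (\<phi> (X x)) \<le> B"
    proof (rule AE_I2)
      fix x assume "x \<in> space M"
      then have "\<phi> (X x) \<in> \<phi> ` cball 0 R"
        using assms(4) by simp
      then show "norm (\<phi> (X x)) \<le> B"
        using B by blast
    qed
    show "(\<lambda>x. \<phi> (X x)) \<in> borel_measurable M"
      using assms(2,3) by (rule borel_measurable_continuous_on)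
  qed
qed

lemma quadratic_minorant_le:
  fixes f :: "real \<Rightarrow> real"
  assumes mono: "mono_on {0..} f" and nonneg: "\<And>x. 0 \<le> x \<Longrightarrow> 0 \<le> f x"
    and "0 \<le> a" "a < c" "0 \<le> x"
  shows "f a * (4 * (x - a) * (c - x) / (c - a)\<^sup>2) \<le> f x"
proof (cases "x < a")
  case True
  then have "4 * (x - a) * (c - x) \<le> 0"
    using \<open>a < c\<close> by (intro mult_nonpos_nonneg[of "4 * (x - a)"]) auto
  then have "4 * (x - a) * (c - x) / (c - a)\<^sup>2 \<le> 0"
    by (rule divide_nonpos_nonneg) simp
  then have "f a * (4 * (x - a) * (c - x) / (c - a)\<^sup>2) \<le> 0"
    using nonneg[OF \<open>0 \<le> a\<close>] by (rule mult_nonneg_nonpos[rotated])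
  with nonneg[OF \<open>0 \<le> x\<close>] show ?thesis
    by linarith
next
  case False
  have "(c - a)\<^sup>2 - 4 * (x - a) * (c - x) = (2 * x - a - c)\<^sup>2"
    by (simp add: power2_eq_square algebra_simps)
  then have "4 * (x - a) * (c - x) / (c - a)\<^sup>2 \<le> 1"
    using \<open>a < c\<close> by (simp add: field_simps)
  then have "f a * (4 * (x - a) * (c - x) / (c - a)\<^sup>2) \<le> f a"
    using nonneg[OF \<open>0 \<le> a\<close>] by (rule mult_left_le)
  also have "f a \<le> f x"
    using False \<open>0 \<le> a\<close> by (intro mono_onD[OF mono]) auto
  finally show ?thesis .
qed

lemma (in prob_space) expectation_comp_ge_half_mean:
  fixes X :: "'a \<Rightarrow> real" and f :: "real \<Rightarrow> real"
  assumes X: "\<And>\<omega>. \<omega> \<in> space M \<Longrightarrow> 0 \<le> X \<omega>" "integrable M X" "integrable M (\<lambda>\<omega>. (X \<omega>)\<^sup>2)"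
    and f: "mono_on {0..} f" "\<And>x. 0 \<le> x \<Longrightarrow> 0 \<le> f x" "integrable M (\<lambda>\<omega>. f (X \<omega>))"
    and mean: "0 < expectation X"
    and second_moment: "expectation (\<lambda>\<omega>. (X \<omega>)\<^sup>2) \<le> 9/4 * (expectation X)\<^sup>2"
  shows "4/49 * f (expectation X / 2) \<le> expectation (\<lambda>\<omega>. f (X \<omega>))"
proof -
  define m where "m = expectation X"
  define a where "a = m / 2"
  define c where "c = 4 * m"
  define k where "k = 4 * f a / (c - a)\<^sup>2"
  have "0 \<le> k"
    using mean f(2)[of a] by (simp add: k_def a_def m_def)
  have minorant: "k * ((a + c) * X \<omega> - (X \<omega>)\<^sup>2 - a * c) \<le> f (X \<omega>)" if "\<omega> \<in> space M" for \<omega>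
  proof -
    have "k * ((a + c) * X \<omega> - (X \<omega>)\<^sup>2 - a * c) = f a * (4 * (X \<omega> - a) * (c - X \<omega>) / (c - a)\<^sup>2)"
      by (simp add: k_def power2_eq_square algebra_simps)
    also have "\<dots> \<le> f (X \<omega>)"
      using mean X(1)[OF that] by (intro quadratic_minorant_le f) (auto simp: a_def c_def m_def)
    finally show ?thesis .
  qed
  have "expectation (\<lambda>\<omega>. (a + c) * X \<omega> - (X \<omega>)\<^sup>2 - a * c)
      = expectation (\<lambda>\<omega>. (a + c) * X \<omega> - (X \<omega>)\<^sup>2) - a * c"
    using X(2,3) by (subst Bochner_Integration.integral_diff) (auto simp: prob_space)
  also have "expectation (\<lambda>\<omega>. (a + c) * X \<omega> - (X \<omega>)\<^sup>2) = (a + c) * m - expectation (\<lambda>\<omega>. (X \<omega>)\<^sup>2)"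
    using X(2,3) by (subst Bochner_Integration.integral_diff) (auto simp: m_def)
  finally have integral_eq: "expectation (\<lambda>\<omega>. k * ((a + c) * X \<omega> - (X \<omega>)\<^sup>2 - a * c))
      = k * ((a + c) * m - expectation (\<lambda>\<omega>. (X \<omega>)\<^sup>2) - a * c)"
    by simp
  have "4/49 * f (m / 2) = k * (m\<^sup>2 / 4)"
    using mean by (simp add: k_def a_def c_def m_def power2_eq_square field_simps)
  also have "\<dots> \<le> k * ((a + c) * m - expectation (\<lambda>\<omega>. (X \<omega>)\<^sup>2) - a * c)"
    using second_moment \<open>0 \<le> k\<close>
    by (intro mult_left_mono) (auto simp: a_def c_def m_def power2_eq_square)
  also have "\<dots> = expectation (\<lambda>\<omega>. k * ((a + c) * X \<omega> - (X \<omega>)\<^sup>2 - a * c))"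
    by (rule integral_eq[symmetric])
  also have "\<dots> \<le> expectation (\<lambda>\<omega>. f (X \<omega>))"
    using X(2,3) f(3) minorant by (intro integral_mono) auto
  finally show ?thesis
    unfolding m_def .
qed

section \<open>Averages over a uniform phase\<close>

abbreviation phase :: "real measure" where
  "phase \<equiv> uniform_measure lborel {0..2*pi}"

lemma prob_space_phase: "prob_space phase"
  by (rule prob_space_uniform_measure) auto

lemma integral_phase_antiderivative:
  fixes F f :: "real \<Rightarrow> real"
  assumes F: "\<And>\<theta>. (F has_real_derivative f \<theta>) (at \<theta>)" and f: "continuous_on UNIV f"
  shows "(\<integral>\<theta>. f \<theta> \<partial>phase) = (F (2*pi) - F 0) / (2*pi)"
proof -
  have "(f has_integral (F (2*pi) - F 0)) {0..2*pi}"
    using F by (intro fundamental_theorem_of_calculus)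
      (auto simp: has_real_derivative_iff_has_vector_derivative has_vector_derivative_at_within)
  then have "integral {0..2*pi} f = F (2*pi) - F 0"
    by (rule integral_unique)
  then show ?thesis
    using integral_uniform_measure_interval[OF _ f, of 0 "2*pi"] by simp
qed

lemma norm_add_cis_sq:
  "(norm (c + cis t))\<^sup>2 = (norm c)\<^sup>2 + 1 + 2 * (Re c * cos t + Im c * sin t)"
proof -
  have "(norm (c + cis t))\<^sup>2 = (Re c + cos t)\<^sup>2 + (Im c + sin t)\<^sup>2"
    by (simp add: cmod_power2)
  also have "\<dots> = (Re c)\<^sup>2 + (Im c)\<^sup>2 + ((cos t)\<^sup>2 + (sin t)\<^sup>2) + 2 * (Re c * cos t + Im c * sin t)"
    by (simp add: power2_eq_square algebra_simps)
  finally show ?thesis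
    by (simp add: cmod_power2)
qed

lemma phase_mean_norm_add_cis_sq:
  "(\<integral>\<theta>. (norm (c + cis \<theta>))\<^sup>2 \<partial>phase) = (norm c)\<^sup>2 + 1"
proof -
  let ?F = "\<lambda>\<theta>. ((norm c)\<^sup>2 + 1) * \<theta> + 2 * (Re c * sin \<theta> - Im c * cos \<theta>)"
  have deriv: "(?F has_real_derivative (norm (c + cis \<theta>))\<^sup>2) (at \<theta>)" for \<theta>
    unfolding norm_add_cis_sq by (auto intro!: derivative_eq_intros simp: algebra_simps)
  have "continuous_on UNIV (\<lambda>\<theta>. (norm (c + cis \<theta>))\<^sup>2)"
    by (intro continuous_intros)
  from integral_phase_antiderivative[OF deriv this] show ?thesis
    by simp
qed

lemma phase_mean_norm_add_cis_pow4:
  "(\<integral>\<theta>. (norm (c + cis \<theta>)) ^ 4 \<partial>phase) = ((norm c)\<^sup>2 + 1)\<^sup>2 + 2 * (norm c)\<^sup>2"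
proof -
  let ?K = "(norm c)\<^sup>2 + 1" and ?a = "Re c" and ?b = "Im c"
  define F where "F = (\<lambda>\<theta>. ?K\<^sup>2 * \<theta> + 4 * ?K * (?a * sin \<theta> - ?b * cos \<theta>)
     + 4 * (?a\<^sup>2 * (\<theta>/2 + sin \<theta> * cos \<theta> / 2) + ?a * ?b * (sin \<theta>)\<^sup>2 + ?b\<^sup>2 * (\<theta>/2 - sin \<theta> * cos \<theta> / 2)))"
  have deriv: "(F has_real_derivative (norm (c + cis \<theta>)) ^ 4) (at \<theta>)" for \<theta>
  proof -
    have "(norm (c + cis \<theta>)) ^ 4 = ((norm (c + cis \<theta>))\<^sup>2)\<^sup>2"
      by simp
    also have "\<dots> = (?K + 2 * (?a * cos \<theta> + ?b * sin \<theta>))\<^sup>2"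
      by (simp only: norm_add_cis_sq)
    finally have F': "(norm (c + cis \<theta>)) ^ 4 = (?K + 2 * (?a * cos \<theta> + ?b * sin \<theta>))\<^sup>2" .
    show ?thesis
      unfolding F_def F'
      by (auto intro!: derivative_eq_intros simp: power2_eq_square algebra_simps)
        (insert sin_cos_squared_add3[of \<theta>], algebra)
  qed
  have "F (2*pi) - F 0 = 2 * pi * (?K\<^sup>2 + 2 * (norm c)\<^sup>2)"
    by (simp add: F_def cmod_power2 algebra_simps)
  moreover have "continuous_on UNIV (\<lambda>\<theta>. (norm (c + cis \<theta>)) ^ 4)"
    by (intro continuous_intros)
  ultimately show ?thesis
    using integral_phase_antiderivative[OF deriv] by simp
qed

section \<open>The geometric mean gain\<close>

text \<open>The larger root of \<open>g\<^sup>2 - (1 + P (r\<^sup>2 + 1)) g + P\<^sup>2 r\<^sup>2 = 0\<close>; by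
  \<open>phase_mean_log_gain\<close> below it is the geometric mean over \<open>\<theta>\<close> of \<open>1 + |c + cis \<theta>|\<^sup>2 P\<close>
  for \<open>|c| = r\<close>.\<close>
definition geom_mean_gain :: "real \<Rightarrow> real \<Rightarrow> real" where
  "geom_mean_gain P r = (1 + P * (r\<^sup>2 + 1) + sqrt ((1 + P * (r\<^sup>2 + 1))\<^sup>2 - 4 * P\<^sup>2 * r\<^sup>2)) / 2"

lemma geom_mean_gain_discriminant:
  fixes P r :: real
  shows "(1 + P * (r\<^sup>2 + 1))\<^sup>2 - 4 * P\<^sup>2 * r\<^sup>2 = (1 + P * r\<^sup>2 - P)\<^sup>2 + 4 * P"
    "(1 + P * (r\<^sup>2 + 1))\<^sup>2 - 4 * P\<^sup>2 * r\<^sup>2 = (1 + P - P * r\<^sup>2)\<^sup>2 + 4 * P * r\<^sup>2"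
  by (simp_all add: power2_eq_square algebra_simps)

lemma geom_mean_gain_quadratic:
  assumes "0 \<le> P"
  shows "(geom_mean_gain P r)\<^sup>2 - (1 + P * (r\<^sup>2 + 1)) * geom_mean_gain P r + P\<^sup>2 * r\<^sup>2 = 0"
proof -
  define D where "D = (1 + P * (r\<^sup>2 + 1))\<^sup>2 - 4 * P\<^sup>2 * r\<^sup>2"
  have "0 \<le> D"
    using assms by (simp add: D_def geom_mean_gain_discriminant(1))
  then have "(sqrt D)\<^sup>2 = D"
    by simp
  then show ?thesis
    unfolding geom_mean_gain_def D_def[symmetric] by (simp add: D_def power2_eq_square field_simps)
qed

lemma one_plus_le_geom_mean_gain:
  assumes "0 \<le> P"
  shows "1 + P \<le> geom_mean_gain P r"
proof -
  have "(1 + P - P * r\<^sup>2)\<^sup>2 \<le> (1 + P * (r\<^sup>2 + 1))\<^sup>2 - 4 * P\<^sup>2 * r\<^sup>2"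
    using assms by (simp add: geom_mean_gain_discriminant(2))
  then have "1 + P - P * r\<^sup>2 \<le> sqrt ((1 + P * (r\<^sup>2 + 1))\<^sup>2 - 4 * P\<^sup>2 * r\<^sup>2)"
    by (rule real_le_rsqrt)
  then show ?thesis
    by (simp add: geom_mean_gain_def algebra_simps)
qed

lemma one_plus_sq_less_geom_mean_gain:
  assumes "0 < P"
  shows "1 + r\<^sup>2 * P < geom_mean_gain P r"
proof -
  have "(1 + P * r\<^sup>2 - P)\<^sup>2 < (1 + P * (r\<^sup>2 + 1))\<^sup>2 - 4 * P\<^sup>2 * r\<^sup>2"
    using assms by (simp add: geom_mean_gain_discriminant(1))
  then have "1 + P * r\<^sup>2 - P < sqrt ((1 + P * (r\<^sup>2 + 1))\<^sup>2 - 4 * P\<^sup>2 * r\<^sup>2)"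
    by (rule real_less_rsqrt)
  then show ?thesis
    by (simp add: geom_mean_gain_def algebra_simps)
qed

lemma mult_less_geom_mean_gain:
  assumes "0 \<le> P"
  shows "P * r < geom_mean_gain P r"
proof -
  define A where "A = 1 + P * (r\<^sup>2 + 1)"
  define X where "X = P * (r - 1)\<^sup>2"
  have "A - 2 * (P * r) = 1 + X"
    by (simp add: A_def X_def power2_eq_square algebra_simps)
  moreover have "0 \<le> X"
    using assms by (simp add: X_def)
  ultimately have "2 * (P * r) < A"
    by linarith
  moreover have "0 \<le> sqrt (A\<^sup>2 - 4 * P\<^sup>2 * r\<^sup>2)"
    using assms by (simp add: A_def geom_mean_gain_discriminant(1))
  ultimately show ?thesis
    unfolding geom_mean_gain_def A_def[symmetric] by argo
qed

lemma geom_mean_gain_pos: "0 \<le> P \<Longrightarrow> 0 < geom_mean_gain P r"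
  using one_plus_le_geom_mean_gain[of P r] by linarith

lemma norm_scaled_cnj_less_one:
  assumes "0 \<le> P"
  shows "norm (of_real (P / geom_mean_gain P (norm c)) * cnj c) < 1"
proof -
  let ?g = "geom_mean_gain P (norm c)"
  have "0 < ?g"
    using assms by (rule geom_mean_gain_pos)
  then have "norm (of_real (P / ?g) * cnj c) = P * norm c / ?g"
    using assms by (simp add: norm_mult norm_divide)
  also have "\<dots> < 1"
    using mult_less_geom_mean_gain[OF assms, of "norm c"] \<open>0 < ?g\<close> by simp
  finally show ?thesis .
qed

text \<open>Expanding both sides with \<open>norm_add_sq_complex\<close>, the identity reduces to
  \<open>g + P\<^sup>2 |c|\<^sup>2 / g = 1 + P (|c|\<^sup>2 + 1)\<close>, which is the quadratic equation defining \<open>g\<close>.\<close>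
lemma one_plus_norm_add_sq_factor:
  fixes c u :: complex
  assumes "0 \<le> P" and "norm u = 1"
  defines "g \<equiv> geom_mean_gain P (norm c)"
  defines "w \<equiv> of_real (P / g) * cnj c"
  shows "1 + (norm (c + u))\<^sup>2 * P = g * (norm (1 + w * u))\<^sup>2"
proof -
  define X where "X = Re (cnj c * u)"
  have "0 < g"
    unfolding g_def using assms(1) by (rule geom_mean_gain_pos)
  have "w * u = of_real (P / g) * (cnj c * u)"
    by (simp add: w_def)
  then have "(norm (1 + w * u))\<^sup>2 = 1 + (P / g)\<^sup>2 * (norm c)\<^sup>2 + 2 * (P / g) * X"
    using assms(1,2) \<open>0 < g\<close>
    by (simp add: norm_add_sq_complex norm_mult norm_divide power_mult_distrib power_divide X_def)
  then have "g * (norm (1 + w * u))\<^sup>2 = g * (1 + (P / g)\<^sup>2 * (norm c)\<^sup>2 + 2 * (P / g) * X)"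
    by simp
  also have "\<dots> = (g\<^sup>2 + P\<^sup>2 * (norm c)\<^sup>2) / g + 2 * P * X"
    using \<open>0 < g\<close> by (simp add: field_simps power2_eq_square)
  also have "g\<^sup>2 + P\<^sup>2 * (norm c)\<^sup>2 = (1 + P * ((norm c)\<^sup>2 + 1)) * g"
    using geom_mean_gain_quadratic[OF assms(1), of "norm c"] unfolding g_def by linarith
  also have "(1 + P * ((norm c)\<^sup>2 + 1)) * g / g = 1 + P * ((norm c)\<^sup>2 + 1)"
    using \<open>0 < g\<close> by simp
  finally have factor_eq: "g * (norm (1 + w * u))\<^sup>2 = 1 + P * ((norm c)\<^sup>2 + 1) + 2 * P * X" .
  have "(norm (c + u))\<^sup>2 = (norm c)\<^sup>2 + 1 + 2 * X"
    using assms(2) by (simp add: norm_add_sq_complex X_def)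
  then show ?thesis
    unfolding factor_eq by (simp add: algebra_simps)
qed

lemma phase_mean_log_gain:
  assumes "0 \<le> P"
  shows "(\<integral>\<theta>. log b (1 + (norm (c + cis \<theta>))\<^sup>2 * P) \<partial>phase) = log b (geom_mean_gain P (norm c))"
proof -
  define g where "g = geom_mean_gain P (norm c)"
  define w where "w = of_real (P / g) * cnj c"
  have "norm w < 1"
    unfolding w_def g_def using assms by (rule norm_scaled_cnj_less_one)
  have "0 < g"
    unfolding g_def using assms by (rule geom_mean_gain_pos)
  have "0 < norm (1 + w * cis t)" for t
  proof -
    have "norm (w * cis t) < 1"
      using \<open>norm w < 1\<close> by (simp add: norm_mult)
    then have "w * cis t \<noteq> -1"
      by auto
    then show ?thesis
      by (auto simp: add_eq_0_iff)
  qed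
  then have log_eq: "log b (1 + (norm (c + cis t))\<^sup>2 * P) = log b g + 2 * log b (norm (1 + w * cis t))" for t
    using \<open>0 < g\<close> one_plus_norm_add_sq_factor[OF assms norm_cis, of c t]
    by (simp add: g_def w_def log_mult log_nat_power)
  have "((\<lambda>t. log b (norm (1 + w * cis t))) has_integral 0) {0..2*pi}"
    using has_integral_divide[OF has_integral_ln_norm_one_plus_cis[OF \<open>norm w < 1\<close>], of "ln b"]
    by (simp add: log_def)
  from has_integral_add[OF has_integral_const_real[of "log b g" 0 "2*pi"] has_integral_mult_right[OF this, of 2]]
  have "((\<lambda>t. log b (1 + (norm (c + cis t))\<^sup>2 * P)) has_integral 2 * pi * log b g) {0..2*pi}"
    unfolding log_eq by (simp add: algebra_simps)
  then have integral_eq: "integral {0..2*pi} (\<lambda>t. log b (1 + (norm (c + cis t))\<^sup>2 * P)) = 2 * pi * log b g"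
    by (rule integral_unique)
  have cont: "continuous_on UNIV (\<lambda>\<theta>. log b (1 + (norm (c + cis \<theta>))\<^sup>2 * P))"
    using assms by (intro continuous_on_log_pos continuous_intros) (simp add: add_pos_nonneg)
  have "(\<integral>\<theta>. log b (1 + (norm (c + cis \<theta>))\<^sup>2 * P) \<partial>phase)
      = integral {0..2*pi} (\<lambda>t. log b (1 + (norm (c + cis t))\<^sup>2 * P)) / (2*pi - 0)"
    by (rule integral_uniform_measure_interval[OF _ cont]) simp
  then show ?thesis
    by (simp add: integral_eq g_def)
qed

section \<open>Expectations over the channel\<close>

lemma prob_space_tx_measure: "prob_space (tx_measure pB)"
  unfolding tx_measure_def by (intro prob_space_pair prob_space_measure_pmf prob_space_phase)

lemma integral_tx_measure:
  assumes "0 \<le> pB" "pB \<le> 1" and "integrable (tx_measure pB) f"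
  shows "(\<integral>x. f x \<partial>tx_measure pB)
    = (1 - pB) * (\<integral>\<theta>. f (True, \<theta>) \<partial>phase) + pB * (\<integral>\<theta>. f (False, \<theta>) \<partial>phase)"
proof -
  interpret pair_sigma_finite "measure_pmf (bernoulli_pmf (1 - pB))" phase
    by (intro pair_sigma_finite.intro prob_space_imp_sigma_finite prob_space_measure_pmf prob_space_phase)
  have "(\<integral>x. f x \<partial>tx_measure pB) = (\<integral>\<beta>. (\<integral>\<theta>. f (\<beta>, \<theta>) \<partial>phase) \<partial>bernoulli_pmf (1 - pB))"
    using integral_fst'[OF assms(3)[unfolded tx_measure_def]] by (simp add: tx_measure_def)
  then show ?thesis
    using assms(1,2) by (simp add: algebra_simps)
qed

lemma tx_measurable: "(\<lambda>x. of_bool (fst x) * cis (snd x)) \<in> borel_measurable (tx_measure pB)"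
proof -
  have [measurable]: "cis \<in> borel_measurable borel"
    by (intro borel_measurable_continuous_onI continuous_on_cis continuous_on_id)
  show ?thesis
    unfolding tx_measure_def by measurable
qed

lemma chan_measurable: "chan L \<in> borel_measurable (\<Pi>\<^sub>M l\<in>{..<L}. tx_measure pB)"
proof -
  have "(\<lambda>\<omega>. of_bool (fst (\<omega> l)) * cis (snd (\<omega> l))) \<in> borel_measurable (\<Pi>\<^sub>M l\<in>{..<L}. tx_measure pB)"
    if "l \<in> {..<L}" for l
    using measurable_comp[OF measurable_component_singleton[OF that] tx_measurable]
    by (simp add: comp_def)
  then show ?thesis
    unfolding chan_def by (intro borel_measurable_sum) auto
qed

lemma norm_chan_le: "norm (chan L \<omega>) \<le> real L"
proof -
  have "norm (chan L \<omega>) \<le> (\<Sum>l<L. norm (of_bool (fst (\<omega> l)) * cis (snd (\<omega> l))))"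
    unfolding chan_def by (rule norm_sum)
  also have "\<dots> \<le> (\<Sum>l<L. 1)"
    by (intro sum_mono) (auto simp: norm_mult)
  finally show ?thesis
    by simp
qed

lemma chan_fun_upd_Suc: "chan (Suc L) (w(L := x)) = chan L w + of_bool (fst x) * cis (snd x)"
proof -
  have "(\<Sum>l<L. of_bool (fst ((w(L := x)) l)) * cis (snd ((w(L := x)) l))) = chan L w"
    unfolding chan_def by (intro sum.cong) auto
  then show ?thesis
    by (simp add: chan_def)
qed

definition chan_expectation :: "real \<Rightarrow> nat \<Rightarrow> (complex \<Rightarrow> real) \<Rightarrow> real" where
  "chan_expectation pB L \<phi> = (\<integral>\<omega>. \<phi> (chan L \<omega>) \<partial>(\<Pi>\<^sub>M l\<in>{..<L}. tx_measure pB))"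

lemma prob_space_chan: "prob_space (\<Pi>\<^sub>M l\<in>{..<L}. tx_measure pB)"
  by (intro prob_space_PiM prob_space_tx_measure)

lemma integrable_chan:
  fixes \<phi> :: "complex \<Rightarrow> real"
  assumes "continuous_on UNIV \<phi>"
  shows "integrable (\<Pi>\<^sub>M l\<in>{..<L}. tx_measure pB) (\<lambda>\<omega>. \<phi> (chan L \<omega>))"
proof (rule integrable_continuous_comp_bounded[where X = "chan L"])
  show "finite_measure (\<Pi>\<^sub>M l\<in>{..<L}. tx_measure pB)"
    using prob_space_chan by (rule prob_space.finite_measure)
  show "norm (chan L \<omega>) \<le> real L" for \<omega>
    by (rule norm_chan_le)
qed (use assms chan_measurable in auto)

lemma chan_expectation_Suc:
  assumes "0 \<le> pB" "pB \<le> 1" and \<phi>: "continuous_on UNIV \<phi>" and \<Phi>: "continuous_on UNIV \<Phi>"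
    and avg: "\<And>c. (\<integral>\<theta>. \<phi> (c + cis \<theta>) \<partial>phase) = \<Phi> c"
  shows "chan_expectation pB (Suc L) \<phi> = pB * chan_expectation pB L \<phi> + (1 - pB) * chan_expectation pB L \<Phi>"
proof -
  interpret product_sigma_finite "\<lambda>l::nat. tx_measure pB"
    by (intro product_sigma_finite.intro prob_space_imp_sigma_finite prob_space_tx_measure)
  have step: "(\<integral>x. \<phi> (c + of_bool (fst x) * cis (snd x)) \<partial>tx_measure pB) = pB * \<phi> c + (1 - pB) * \<Phi> c"
    for c
  proof -
    have "integrable (tx_measure pB) (\<lambda>x. \<phi> (c + of_bool (fst x) * cis (snd x)))"
    proof (rule integrable_continuous_comp_bounded[where X = "\<lambda>x. c + of_bool (fst x) * cis (snd x)"])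
      show "finite_measure (tx_measure pB)"
        using prob_space_tx_measure by (rule prob_space.finite_measure)
      show "(\<lambda>x. c + of_bool (fst x) * cis (snd x)) \<in> borel_measurable (tx_measure pB)"
        using tx_measurable by simp
      show "norm (c + of_bool (fst x) * cis (snd x)) \<le> norm c + 1" for x
        using norm_triangle_ineq[of c "cis (snd x)"] by (cases "fst x") simp_all
    qed (rule \<phi>)
    then show ?thesis
      using assms(1,2) by (simp add: integral_tx_measure avg prob_space.prob_space[OF prob_space_phase])
  qed
  have "{..<Suc L} = insert L {..<L}"
    by auto
  then have "chan_expectation pB (Suc L) \<phi>
      = (\<integral>w. (\<integral>x. \<phi> (chan (Suc L) (w(L := x))) \<partial>tx_measure pB) \<partial>(\<Pi>\<^sub>M l\<in>{..<L}. tx_measure pB))"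
    using integrable_chan[OF \<phi>, of "Suc L" pB]
    by (simp add: chan_expectation_def product_integral_insert)
  also have "\<dots> = (\<integral>w. pB * \<phi> (chan L w) + (1 - pB) * \<Phi> (chan L w) \<partial>(\<Pi>\<^sub>M l\<in>{..<L}. tx_measure pB))"
    by (simp only: chan_fun_upd_Suc step)
  also have "\<dots> = pB * chan_expectation pB L \<phi> + (1 - pB) * chan_expectation pB L \<Phi>"
    using integrable_chan[OF \<phi>, of L pB] integrable_chan[OF \<Phi>, of L pB]
    by (simp add: chan_expectation_def)
  finally show ?thesis .
qed

lemma chan_expectation_add:
  assumes "continuous_on UNIV \<phi>" "continuous_on UNIV \<psi>"
  shows "chan_expectation pB L (\<lambda>z. \<phi> z + \<psi> z) = chan_expectation pB L \<phi> + chan_expectation pB L \<psi>"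
  unfolding chan_expectation_def using integrable_chan[OF assms(1)] integrable_chan[OF assms(2)]
  by (rule Bochner_Integration.integral_add)

lemma chan_expectation_cmult: "chan_expectation pB L (\<lambda>z. a * \<phi> z) = a * chan_expectation pB L \<phi>"
  by (simp add: chan_expectation_def)

lemma chan_expectation_const: "chan_expectation pB L (\<lambda>z. a) = a"
proof -
  interpret prob_space "\<Pi>\<^sub>M l\<in>{..<L}. tx_measure pB"
    by (rule prob_space_chan)
  show ?thesis
    by (simp add: chan_expectation_def prob_space)
qed

lemma chan_expectation_0: "chan_expectation pB 0 \<phi> = \<phi> 0"
  using chan_expectation_const[of pB 0 "\<phi> 0"] by (simp add: chan_expectation_def chan_def)

lemma chan_expectation_mono:
  assumes "continuous_on UNIV \<phi>" "continuous_on UNIV \<psi>" and "\<And>z. \<phi> z \<le> \<psi> z"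
  shows "chan_expectation pB L \<phi> \<le> chan_expectation pB L \<psi>"
  unfolding chan_expectation_def using integrable_chan[OF assms(1)] integrable_chan[OF assms(2)] assms(3)
  by (rule integral_mono)

lemma chan_expectation_strict_mono:
  assumes "continuous_on UNIV \<phi>" "continuous_on UNIV \<psi>" and "\<And>z. \<phi> z < \<psi> z"
  shows "chan_expectation pB L \<phi> < chan_expectation pB L \<psi>"
proof -
  interpret prob_space "\<Pi>\<^sub>M l\<in>{..<L}. tx_measure pB"
    by (rule prob_space_chan)
  show ?thesis
    unfolding chan_expectation_def using integrable_chan[OF assms(1)] integrable_chan[OF assms(2)] assms(3)
    by (intro integral_less_AE_space) (auto simp: emeasure_space_1)
qed

lemma chan_expectation_norm_sq:
  assumes "0 \<le> pB" "pB \<le> 1"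
  shows "chan_expectation pB L (\<lambda>z. (norm z)\<^sup>2) = (1 - pB) * L"
proof (induction L)
  case 0
  show ?case
    by (simp add: chan_expectation_0)
next
  case (Suc L)
  have cont: "continuous_on UNIV (\<lambda>z::complex. (norm z)\<^sup>2)"
    by (intro continuous_intros)
  have "chan_expectation pB (Suc L) (\<lambda>z. (norm z)\<^sup>2)
      = pB * chan_expectation pB L (\<lambda>z. (norm z)\<^sup>2) + (1 - pB) * chan_expectation pB L (\<lambda>z. (norm z)\<^sup>2 + 1)"
    using cont by (intro chan_expectation_Suc assms continuous_intros phase_mean_norm_add_cis_sq)
  also have "chan_expectation pB L (\<lambda>z. (norm z)\<^sup>2 + 1) = chan_expectation pB L (\<lambda>z. (norm z)\<^sup>2) + 1"
    using cont by (simp add: chan_expectation_add chan_expectation_const)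
  finally show ?case
    by (simp add: Suc.IH algebra_simps)
qed

lemma chan_expectation_norm_pow4:
  assumes "0 \<le> pB" "pB \<le> 1"
  shows "chan_expectation pB L (\<lambda>z. (norm z) ^ 4) = (1 - pB) * L + 2 * (1 - pB)\<^sup>2 * L * (real L - 1)"
proof (induction L)
  case 0
  show ?case
    by (simp add: chan_expectation_0)
next
  case (Suc L)
  have cont2: "continuous_on UNIV (\<lambda>z::complex. (norm z)\<^sup>2)"
    and cont4: "continuous_on UNIV (\<lambda>z::complex. (norm z) ^ 4)"
    by (intro continuous_intros)+
  have "chan_expectation pB (Suc L) (\<lambda>z. (norm z) ^ 4)
      = pB * chan_expectation pB L (\<lambda>z. (norm z) ^ 4)
        + (1 - pB) * chan_expectation pB L (\<lambda>z. ((norm z)\<^sup>2 + 1)\<^sup>2 + 2 * (norm z)\<^sup>2)"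
    using cont4 by (intro chan_expectation_Suc assms continuous_intros phase_mean_norm_add_cis_pow4)
  also have "(\<lambda>z::complex. ((norm z)\<^sup>2 + 1)\<^sup>2 + 2 * (norm z)\<^sup>2) = (\<lambda>z. (norm z) ^ 4 + 4 * (norm z)\<^sup>2 + 1)"
    by (simp add: fun_eq_iff power2_eq_square power4_eq_xxxx algebra_simps)
  also have "chan_expectation pB L \<dots>
      = chan_expectation pB L (\<lambda>z. (norm z) ^ 4) + 4 * ((1 - pB) * L) + 1"
    using cont2 cont4 assms
    by (simp add: chan_expectation_add chan_expectation_cmult chan_expectation_const
        chan_expectation_norm_sq continuous_intros)
  finally show ?case
    by (simp add: Suc.IH power2_eq_square algebra_simps)
qed

section \<open>The ergodic rate\<close>

lemma continuous_on_log_one_plus_norm_sq: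
  assumes "0 \<le> P"
  shows "continuous_on UNIV (\<lambda>z::complex. log b (1 + (norm z)\<^sup>2 * P))"
  using assms by (intro continuous_on_log_pos continuous_intros) (simp add: add_pos_nonneg)

lemma continuous_on_log_geom_mean_gain:
  assumes "0 \<le> P"
  shows "continuous_on UNIV (\<lambda>z::complex. log b (geom_mean_gain P (norm z)))"
proof (rule continuous_on_log_pos)
  show "continuous_on UNIV (\<lambda>z::complex. geom_mean_gain P (norm z))"
    unfolding geom_mean_gain_def by (intro continuous_intros) simp
qed (rule geom_mean_gain_pos[OF assms])

lemma rate_eq_chan_expectation: "rate b P pB L = chan_expectation pB L (\<lambda>z. log b (1 + (norm z)\<^sup>2 * P))"
  by (simp add: rate_def chan_expectation_def)

lemma rate_Suc:
  assumes "0 \<le> P" "0 \<le> pB" "pB \<le> 1"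
  shows "rate b P pB (Suc L)
    = pB * rate b P pB L + (1 - pB) * chan_expectation pB L (\<lambda>z. log b (geom_mean_gain P (norm z)))"
  unfolding rate_eq_chan_expectation
  using assms by (intro chan_expectation_Suc continuous_on_log_one_plus_norm_sq continuous_on_log_geom_mean_gain
      phase_mean_log_gain)

lemma rate_ge:
  assumes "1 < b" "0 \<le> P" "0 \<le> pB" "pB \<le> 1"
  shows "(1 - pB ^ L) * log b (1 + P) \<le> rate b P pB L"
proof (induction L)
  case 0
  show ?case
    by (simp add: rate_eq_chan_expectation chan_expectation_0)
next
  case (Suc L)
  have "chan_expectation pB L (\<lambda>z. log b (1 + P))
      \<le> chan_expectation pB L (\<lambda>z. log b (geom_mean_gain P (norm z)))"
    by (rule chan_expectation_mono[OF continuous_on_const continuous_on_log_geom_mean_gain[OF assms(2)]])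
      (use one_plus_le_geom_mean_gain[OF assms(2)] geom_mean_gain_pos[OF assms(2)] assms(1,2)
        in \<open>simp add: add_pos_nonneg\<close>)
  then have "(1 - pB) * log b (1 + P) \<le> (1 - pB) * chan_expectation pB L (\<lambda>z. log b (geom_mean_gain P (norm z)))"
    using assms(4) by (intro mult_left_mono) (simp_all add: chan_expectation_const)
  then have "(1 - pB ^ Suc L) * log b (1 + P)
      \<le> pB * ((1 - pB ^ L) * log b (1 + P)) + (1 - pB) * chan_expectation pB L (\<lambda>z. log b (geom_mean_gain P (norm z)))"
    by (simp add: algebra_simps)
  also have "\<dots> \<le> rate b P pB (Suc L)"
    using Suc.IH assms(3) by (simp add: rate_Suc[OF assms(2-4)] mult_left_mono)
  finally show ?case .
qed

lemma rate_less_rate_Suc: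
  assumes "1 < b" "0 < P" "0 \<le> pB" "pB < 1"
  shows "rate b P pB L < rate b P pB (Suc L)"
proof -
  have "rate b P pB L < chan_expectation pB L (\<lambda>z. log b (geom_mean_gain P (norm z)))"
    unfolding rate_eq_chan_expectation
  proof (rule chan_expectation_strict_mono)
    show "log b (1 + (norm z)\<^sup>2 * P) < log b (geom_mean_gain P (norm z))" for z :: complex
      using one_plus_sq_less_geom_mean_gain[OF assms(2), of "norm z"] assms(1,2)
      by (simp add: add_pos_nonneg geom_mean_gain_pos)
  qed (use assms in \<open>simp_all add: continuous_on_log_one_plus_norm_sq continuous_on_log_geom_mean_gain\<close>)
  then have "(1 - pB) * rate b P pB L < (1 - pB) * chan_expectation pB L (\<lambda>z. log b (geom_mean_gain P (norm z)))"
    using assms(4) by (intro mult_strict_left_mono) auto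
  then show ?thesis
    using assms by (simp add: rate_Suc algebra_simps)
qed

lemma rate_ge_log_half_mean:
  assumes "1 < b" "0 \<le> P" "0 \<le> pB" "pB \<le> 1" and "4 \<le> (1 - pB) * L"
  shows "4/49 * log b (1 + (1 - pB) * L / 2 * P) \<le> rate b P pB L"
proof -
  interpret prob_space "\<Pi>\<^sub>M l\<in>{..<L}. tx_measure pB"
    by (rule prob_space_chan)
  let ?m = "(1 - pB) * L"
  have mean: "expectation (\<lambda>\<omega>. (norm (chan L \<omega>))\<^sup>2) = ?m"
    using chan_expectation_norm_sq[OF assms(3,4)] by (simp add: chan_expectation_def)
  have "expectation (\<lambda>\<omega>. ((norm (chan L \<omega>))\<^sup>2)\<^sup>2) = ?m + 2 * (1 - pB)\<^sup>2 * L * (real L - 1)"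
    using chan_expectation_norm_pow4[OF assms(3,4)] by (simp add: chan_expectation_def)
  also have "\<dots> \<le> 9/4 * ?m\<^sup>2"
  proof -
    have "?m \<le> ?m\<^sup>2 / 4"
      using mult_left_mono[OF assms(5), of ?m] assms(5) by (simp add: power2_eq_square)
    moreover have "2 * (1 - pB)\<^sup>2 * L * (real L - 1) = 2 * ?m\<^sup>2 - 2 * (1 - pB)\<^sup>2 * L"
      by (simp add: power2_eq_square algebra_simps)
    moreover have "0 \<le> (1 - pB)\<^sup>2 * L"
      by simp
    ultimately show ?thesis
      by argo
  qed
  finally have second_moment: "expectation (\<lambda>\<omega>. ((norm (chan L \<omega>))\<^sup>2)\<^sup>2) \<le> 9/4 * ?m\<^sup>2" .
  have "4/49 * log b (1 + expectation (\<lambda>\<omega>. (norm (chan L \<omega>))\<^sup>2) / 2 * P)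
      \<le> expectation (\<lambda>\<omega>. log b (1 + (norm (chan L \<omega>))\<^sup>2 * P))"
  proof (rule expectation_comp_ge_half_mean)
    show "integrable (\<Pi>\<^sub>M l\<in>{..<L}. tx_measure pB) (\<lambda>\<omega>. (norm (chan L \<omega>))\<^sup>2)"
      by (rule integrable_chan) (intro continuous_intros)
    show "integrable (\<Pi>\<^sub>M l\<in>{..<L}. tx_measure pB) (\<lambda>\<omega>. ((norm (chan L \<omega>))\<^sup>2)\<^sup>2)"
      by (rule integrable_chan[where \<phi> = "\<lambda>z. ((norm z)\<^sup>2)\<^sup>2"]) (intro continuous_intros)
    show "integrable (\<Pi>\<^sub>M l\<in>{..<L}. tx_measure pB) (\<lambda>\<omega>. log b (1 + (norm (chan L \<omega>))\<^sup>2 * P))"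
      by (rule integrable_chan[OF continuous_on_log_one_plus_norm_sq[OF assms(2)]])
    show "mono_on {0..} (\<lambda>x. log b (1 + x * P))"
      using assms(1,2) by (intro mono_onI) (simp add: add_pos_nonneg mult_right_mono)
    show "0 \<le> log b (1 + x * P)" if "0 \<le> x" for x
      using assms(1,2) that by (simp add: add_pos_nonneg)
  qed (use mean second_moment assms(5) in auto)
  then show ?thesis
    using mean by (simp add: rate_def)
qed

lemma filterlim_rate_at_top:
  assumes "1 < b" "0 < P" "0 \<le> pB" "pB < 1"
  shows "filterlim (rate b P pB) at_top sequentially"
proof (rule filterlim_at_top_mono[where f = "\<lambda>L. 4/49 * log b (1 + (1 - pB) * real L / 2 * P)"])
  have "0 < (1 - pB) / 2 * P"
    using assms by simp
  then have "filterlim (\<lambda>L. 1 + (1 - pB) / 2 * P * real L) at_top sequentially"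
    by (intro filterlim_tendsto_add_at_top[OF tendsto_const]
        filterlim_tendsto_pos_mult_at_top[OF tendsto_const] filterlim_real_sequentially)
  from filterlim_compose[OF ln_at_top this]
  have "filterlim (\<lambda>L. 4 / (49 * ln b) * ln (1 + (1 - pB) / 2 * P * real L)) at_top sequentially"
    using assms(1) by (intro filterlim_tendsto_pos_mult_at_top[OF tendsto_const]) auto
  then show "filterlim (\<lambda>L. 4/49 * log b (1 + (1 - pB) * real L / 2 * P)) at_top sequentially"
    by (simp add: log_def mult.commute mult.left_commute)
  have "eventually (\<lambda>L. 4 / (1 - pB) \<le> real L) sequentially"
    using filterlim_real_sequentially by (simp add: filterlim_at_top)
  then show "eventually (\<lambda>L. 4/49 * log b (1 + (1 - pB) * real L / 2 * P) \<le> rate b P pB L) sequentially"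
  proof (rule eventually_mono)
    fix L :: nat
    assume "4 / (1 - pB) \<le> real L"
    then have "4 \<le> (1 - pB) * L"
      using assms(4) by (simp add: field_simps)
    then show "4/49 * log b (1 + (1 - pB) * L / 2 * P) \<le> rate b P pB L"
      using assms by (intro rate_ge_log_half_mean) auto
  qed
qed

theorem proposition4:
  fixes b P pB :: real
  assumes "b > 1" and "P > 0" and "0 \<le> pB" and "pB < 1"
  shows "(\<forall>L\<ge>1. rate b P pB L \<ge> (1 - pB ^ L) * log b (1 + P))
       \<and> (\<forall>L\<ge>1. rate b P pB L < rate b P pB (Suc L))
       \<and> filterlim (rate b P pB) at_top sequentially"
  using assms rate_ge[of b P pB] rate_less_rate_Suc[of b P pB] filterlim_rate_at_top[of b P pB]
  by auto

end
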